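(* Let $X$ be a compact, zero-dimensional metric space with a continuous free action of a countable amenable group $G$, and let $(F_n)$ be a Følner sequence of $G$ as in the context. For every $n$ there exists a clopen set $V\subset X$ such that (1) the sets $g(V)$, $g\in F_n$, are pairwise disjoint, and (2) there exists $N\ge n$ with $\bigcup_{g\in F_N}g(V)=X$.
   Context: The Følner sequence $(F_n)$ consists of finite sets with $|F_n\triangle gF_n|/|F_n|\to0$ for all $g$, and is assumed to satisfy $e\in F_n$, $F_n\subset F_{n+1}$ for all $n$, and every $g\in G$ belongs to $F_n$ for all sufficiently large $n$. The action is free if $gx=x$ implies $g=e$. *)

theory Defs
  imports "HOL-Analysis.Analysis" "HOL-Algebra.Group_Action"
begin

definition zero_dimensional :: "'a::topological_space set \<Rightarrow> bool" where
  "zero_dimensional X \<longleftrightarrow>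
     (\<forall>U x. openin (top_of_set X) U \<and> x \<in> U \<longrightarrow>
        (\<exists>V. openin (top_of_set X) V \<and> closedin (top_of_set X) V \<and> x \<in> V \<and> V \<subseteq> U))"

definition symdiff :: "'a set \<Rightarrow> 'a set \<Rightarrow> 'a set" where
  "symdiff A B = (A - B) \<union> (B - A)"

definition foelner_seq :: "('g, 'b) monoid_scheme \<Rightarrow> (nat \<Rightarrow> 'g set) \<Rightarrow> bool" where
  "foelner_seq G F \<longleftrightarrow>
     (\<forall>n. F n \<subseteq> carrier G \<and> finite (F n) \<and> F n \<noteq> {}) \<and>
     (\<forall>g\<in>carrier G.
        (\<lambda>n. real (card (symdiff (F n) ((\<lambda>h. g \<otimes>\<^bsub>G\<^esub> h) ` F n))) / real (card (F n)))
          \<longlonglongrightarrow> 0)"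

definition amenable :: "('g, 'b) monoid_scheme \<Rightarrow> bool" where
  "amenable G \<longleftrightarrow> (\<exists>F. foelner_seq G F)"

definition free_action :: "('g, 'b) monoid_scheme \<Rightarrow> ('g \<Rightarrow> 'a \<Rightarrow> 'a) \<Rightarrow> 'a set \<Rightarrow> bool" where
  "free_action G \<phi> X \<longleftrightarrow> (\<forall>g\<in>carrier G. \<forall>x\<in>X. \<phi> g x = x \<longrightarrow> g = \<one>\<^bsub>G\<^esub>)"

end

theory Submission
  imports Defs
begin

text \<open>Let K = F_n\<inverse> F_n - {e}. By freeness, every point has a clopen neighbourhood U
  with U \<inter> kU = {} for all k \<in> K; by compactness finitely many of them cover X. Merging them
  one at a time (adding only the part of the new set that is not yet covered by the K-translates)
  yields a clopen V with V \<inter> kV = {} for k \<in> K and V \<union> KV = X. The first property makes the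
  translates gV, g \<in> F_n, pairwise disjoint; the second gives the covering as soon as
  F_N contains e and K.\<close>

definition difference_set :: "('g, 'b) monoid_scheme \<Rightarrow> 'g set \<Rightarrow> 'g set" where
  "difference_set G F = {inv\<^bsub>G\<^esub> g \<otimes>\<^bsub>G\<^esub> h | g h. g \<in> F \<and> h \<in> F}"

lemma finite_difference_set: "finite F \<Longrightarrow> finite (difference_set G F)"
proof -
  assume "finite F"
  have "difference_set G F = (\<lambda>(g, h). inv\<^bsub>G\<^esub> g \<otimes>\<^bsub>G\<^esub> h) ` (F \<times> F)"
    unfolding difference_set_def by auto
  then show ?thesis
    using \<open>finite F\<close> by simp
qed

lemma (in group) difference_set_subset_carrier:
  "F \<subseteq> carrier G \<Longrightarrow> difference_set G F \<subseteq> carrier G"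
  unfolding difference_set_def by auto

lemma (in group) inv_in_difference_set:
  assumes "F \<subseteq> carrier G" "k \<in> difference_set G F"
  shows "inv k \<in> difference_set G F"
proof -
  obtain g h where "g \<in> F" "h \<in> F" "k = inv g \<otimes> h"
    using assms(2) unfolding difference_set_def by blast
  moreover from this have "inv k = inv h \<otimes> g"
    using assms(1) by (auto simp: inv_mult_group subsetD)
  ultimately show ?thesis
    unfolding difference_set_def by blast
qed

locale continuous_group_action = group_action G "UNIV :: 'a::t2_space set" \<phi>
  for G :: "('g, 'b) monoid_scheme" (structure) and \<phi> +
  assumes continuous_on_action: "g \<in> carrier G \<Longrightarrow> continuous_on UNIV (\<phi> g)"

sublocale continuous_group_action \<subseteq> group G
  using group_hom group_hom.axioms(1) by blast

context continuous_group_action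
begin

lemma action_one [simp]: "\<phi> \<one> x = x"
  using fun_cong[OF id_eq_one, of x] by simp

lemma action_mult: "g \<in> carrier G \<Longrightarrow> h \<in> carrier G \<Longrightarrow> \<phi> (g \<otimes> h) x = \<phi> g (\<phi> h x)"
  using composition_rule by simp

lemma action_inv_cancel [simp]: "g \<in> carrier G \<Longrightarrow> \<phi> (inv g) (\<phi> g x) = x"
  by (metis action_mult action_one inv_closed l_inv)

lemma image_action_eq_vimage_inv: "g \<in> carrier G \<Longrightarrow> \<phi> g ` V = \<phi> (inv g) -` V"
  by (auto simp: image_iff) (metis action_inv_cancel inv_closed inv_inv)

lemma clopen_image_action:
  assumes "open V" "closed V" "g \<in> carrier G"
  shows "open (\<phi> g ` V)" "closed (\<phi> g ` V)"
  using assms continuous_on_action[of "inv g"]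
  by (simp_all add: image_action_eq_vimage_inv open_vimage closed_vimage)

lemma open_nbhd_disjoint_translate:
  assumes "g \<in> carrier G" "\<phi> g x \<noteq> x"
  obtains A where "open A" "x \<in> A" "A \<inter> \<phi> g ` A = {}"
proof -
  obtain S T where ST: "open S" "open T" "x \<in> S" "\<phi> g x \<in> T" "S \<inter> T = {}"
    using separation_t2 assms(2) by metis
  have "open (S \<inter> \<phi> g -` T)"
    using ST continuous_on_action[OF assms(1)] by (simp add: open_Int open_vimage)
  moreover have "(S \<inter> \<phi> g -` T) \<inter> \<phi> g ` (S \<inter> \<phi> g -` T) = {}"
    using ST(5) by blast
  ultimately show thesis
    using ST(3,4) that by blast
qed

lemma clopen_nbhd_disjoint_translates:
  assumes "zero_dimensional (UNIV :: 'a set)" "free_action G \<phi> UNIV"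
    and "K \<subseteq> carrier G" "finite K" "\<one> \<notin> K"
  obtains U where "open U" "closed U" "x \<in> U" "\<forall>k\<in>K. U \<inter> \<phi> k ` U = {}"
proof -
  have "\<forall>k\<in>K. \<exists>A. open A \<and> x \<in> A \<and> A \<inter> \<phi> k ` A = {}"
  proof
    fix k assume "k \<in> K"
    then have "\<phi> k x \<noteq> x"
      using assms(2,3,5) unfolding free_action_def by blast
    then show "\<exists>A. open A \<and> x \<in> A \<and> A \<inter> \<phi> k ` A = {}"
      using open_nbhd_disjoint_translate \<open>k \<in> K\<close> assms(3) by (metis subsetD)
  qed
  then obtain A where A: "\<forall>k\<in>K. open (A k) \<and> x \<in> A k \<and> A k \<inter> \<phi> k ` A k = {}"
    by metis
  have "open (\<Inter>k\<in>K. A k)"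
    using A assms(4) by (simp add: open_INT)
  then obtain U where U: "open U" "closed U" "x \<in> U" "U \<subseteq> (\<Inter>k\<in>K. A k)"
    using assms(1) A unfolding zero_dimensional_def by force
  have "\<forall>k\<in>K. U \<inter> \<phi> k ` U = {}"
    using A U(4) by blast
  with U(1-3) show thesis by (rule that)
qed

lemma clopen_disjoint_translates_extend:
  assumes K: "K \<subseteq> carrier G" "finite K" "\<forall>k\<in>K. inv k \<in> K"
    and V: "open V" "closed V" "\<forall>k\<in>K. V \<inter> \<phi> k ` V = {}"
    and U: "open U" "closed U" "\<forall>k\<in>K. U \<inter> \<phi> k ` U = {}"
  obtains V' where "open V'" "closed V'" "\<forall>k\<in>K. V' \<inter> \<phi> k ` V' = {}"
    "V \<subseteq> V'" "U \<subseteq> V' \<union> (\<Union>k\<in>K. \<phi> k ` V')"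
proof -
  define B where "B = (\<Union>k\<in>K. \<phi> k ` V)"
  define V' where "V' = V \<union> (U - B)"
  have "open B" "closed B"
    unfolding B_def using K(1,2) V(1,2) clopen_image_action by (auto intro!: open_UN closed_UN)
  then have "open V'" "closed V'"
    unfolding V'_def using U(1,2) V(1,2) by (auto intro: open_Diff closed_Diff)
  moreover have "V' \<inter> \<phi> k ` V' = {}" if k: "k \<in> K" for k
  proof -
    have "\<phi> k ` (U - B) \<inter> V = {}"
      \<comment> \<open>a point of U - B moved into V by k would lie in \<phi> (inv k) ` V, which is part of B\<close>
      using k K(1,3) unfolding B_def by (force intro: rev_image_eqI[of "\<phi> k _"])
    moreover have "(U - B) \<inter> \<phi> k ` V = {}"
      unfolding B_def using k by blast
    ultimately show ?thesis
      unfolding V'_def using k U(3) V(3) by blast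
  qed
  moreover have "U \<subseteq> V' \<union> (\<Union>k\<in>K. \<phi> k ` V')"
    unfolding V'_def B_def by blast
  ultimately show thesis
    using that unfolding V'_def by blast
qed

lemma clopen_disjoint_translates_cover_Union:
  assumes K: "K \<subseteq> carrier G" "finite K" "\<forall>k\<in>K. inv k \<in> K"
    and "finite \<U>" "\<forall>U\<in>\<U>. open U \<and> closed U \<and> (\<forall>k\<in>K. U \<inter> \<phi> k ` U = {})"
  obtains V where "open V" "closed V" "\<forall>k\<in>K. V \<inter> \<phi> k ` V = {}"
    "\<Union>\<U> \<subseteq> V \<union> (\<Union>k\<in>K. \<phi> k ` V)"
  using assms(4,5)
proof (induction \<U> arbitrary: thesis rule: finite_induct)
  case empty
  show ?case by (rule empty.prems(1)[of "{}"]) simp_all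
next
  case (insert U \<U>)
  obtain V where V: "open V" "closed V" "\<forall>k\<in>K. V \<inter> \<phi> k ` V = {}"
    "\<Union>\<U> \<subseteq> V \<union> (\<Union>k\<in>K. \<phi> k ` V)"
    using insert.prems(2) by (auto intro: insert.IH)
  obtain V' where V': "open V'" "closed V'" "\<forall>k\<in>K. V' \<inter> \<phi> k ` V' = {}"
    "V \<subseteq> V'" "U \<subseteq> V' \<union> (\<Union>k\<in>K. \<phi> k ` V')"
    using insert.prems(2) by (auto intro: clopen_disjoint_translates_extend[OF K V(1-3)])
  have "\<Union>\<U> \<subseteq> V' \<union> (\<Union>k\<in>K. \<phi> k ` V')"
    using V(4) V'(4) by blast
  then show ?case
    using insert.prems(1) V'(1-3,5) by simp
qed

lemma exists_clopen_marker_set: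
  assumes "compact (UNIV :: 'a set)" "zero_dimensional (UNIV :: 'a set)" "free_action G \<phi> UNIV"
    and K: "K \<subseteq> carrier G" "finite K" "\<forall>k\<in>K. inv k \<in> K" "\<one> \<notin> K"
  obtains V where "open V" "closed V" "\<forall>k\<in>K. V \<inter> \<phi> k ` V = {}"
    "V \<union> (\<Union>k\<in>K. \<phi> k ` V) = UNIV"
proof -
  define \<T> where "\<T> = {U. open U \<and> closed U \<and> (\<forall>k\<in>K. U \<inter> \<phi> k ` U = {})}"
  have cover: "UNIV \<subseteq> \<Union>\<T>"
  proof
    fix x :: 'a
    obtain U where "open U" "closed U" "x \<in> U" "\<forall>k\<in>K. U \<inter> \<phi> k ` U = {}"
      using clopen_nbhd_disjoint_translates[OF assms(2,3) K(1,2,4)] .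
    then show "x \<in> \<Union>\<T>"
      unfolding \<T>_def by blast
  qed
  obtain \<U> where \<U>: "\<U> \<subseteq> \<T>" "finite \<U>" "UNIV \<subseteq> \<Union>\<U>"
    by (rule compactE[OF assms(1) cover]) (simp add: \<T>_def)
  then have clopen_\<U>: "\<forall>U\<in>\<U>. open U \<and> closed U \<and> (\<forall>k\<in>K. U \<inter> \<phi> k ` U = {})"
    unfolding \<T>_def by blast
  obtain V where V: "open V" "closed V" "\<forall>k\<in>K. V \<inter> \<phi> k ` V = {}"
    "\<Union>\<U> \<subseteq> V \<union> (\<Union>k\<in>K. \<phi> k ` V)"
    by (rule clopen_disjoint_translates_cover_Union[OF K(1-3) \<U>(2) clopen_\<U>])
  have "UNIV \<subseteq> V \<union> (\<Union>k\<in>K. \<phi> k ` V)"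
    using \<U>(3) V(4) by (rule subset_trans)
  then show thesis
    by (rule that[OF V(1-3) top_le])
qed

lemma disjoint_family_on_translates:
  assumes "F \<subseteq> carrier G" "\<forall>k\<in>difference_set G F - {\<one>}. V \<inter> \<phi> k ` V = {}"
  shows "disjoint_family_on (\<lambda>g. \<phi> g ` V) F"
  unfolding disjoint_family_on_def
proof (intro ballI impI)
  fix g h assume gh: "g \<in> F" "h \<in> F" "g \<noteq> h"
  then have carrier: "g \<in> carrier G" "h \<in> carrier G"
    using assms(1) by auto
  define k where "k = inv g \<otimes> h"
  have "g \<otimes> k = h"
    unfolding k_def using carrier by (simp add: m_assoc[symmetric])
  then have "k \<noteq> \<one>"
    using carrier gh(3) by auto
  moreover have "k \<in> difference_set G F"
    unfolding k_def difference_set_def using gh(1,2) by blast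
  ultimately have disjoint: "V \<inter> \<phi> k ` V = {}"
    using assms(2) by blast
  show "\<phi> g ` V \<inter> \<phi> h ` V = {}"
  proof (rule ccontr)
    assume "\<phi> g ` V \<inter> \<phi> h ` V \<noteq> {}"
    then obtain a b where ab: "a \<in> V" "b \<in> V" "\<phi> g a = \<phi> h b"
      by blast
    have "\<phi> k b = \<phi> (inv g) (\<phi> g a)"
      unfolding k_def using carrier ab(3) by (simp add: action_mult)
    then have "a = \<phi> k b"
      using carrier by simp
    then show False
      using ab(1,2) disjoint by blast
  qed
qed

lemma exists_clopen_tower_base:
  assumes "compact (UNIV :: 'a set)" "zero_dimensional (UNIV :: 'a set)" "free_action G \<phi> UNIV"
    and F: "F \<subseteq> carrier G" "finite F"
  obtains V where "open V" "closed V" "disjoint_family_on (\<lambda>g. \<phi> g ` V) F"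
    "V \<union> (\<Union>k\<in>difference_set G F. \<phi> k ` V) = UNIV"
proof -
  define K where "K = difference_set G F - {\<one>}"
  have K: "K \<subseteq> carrier G" "finite K" "\<forall>k\<in>K. inv k \<in> K" "\<one> \<notin> K"
    unfolding K_def using difference_set_subset_carrier[OF F(1)] finite_difference_set[OF F(2)]
      inv_in_difference_set[OF F(1)] by (auto simp: inv_eq_1_iff subset_iff)
  obtain V where V: "open V" "closed V" "\<forall>k\<in>K. V \<inter> \<phi> k ` V = {}"
    "V \<union> (\<Union>k\<in>K. \<phi> k ` V) = UNIV"
    by (rule exists_clopen_marker_set[OF assms(1-3) K])
  have "disjoint_family_on (\<lambda>g. \<phi> g ` V) F"
    using V(3) by (intro disjoint_family_on_translates[OF F(1)]) (simp add: K_def)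
  moreover have "(\<Union>k\<in>K. \<phi> k ` V) \<subseteq> (\<Union>k\<in>difference_set G F. \<phi> k ` V)"
    unfolding K_def by blast
  then have "V \<union> (\<Union>k\<in>difference_set G F. \<phi> k ` V) = UNIV"
    using V(4) by (metis Un_mono order_refl top_le)
  ultimately show thesis
    by (rule that[OF V(1,2)])
qed

end

theorem mainTheorem4:
  fixes G :: "('g, 'b) monoid_scheme"
    and \<phi> :: "'g \<Rightarrow> 'a::metric_space \<Rightarrow> 'a"
    and F :: "nat \<Rightarrow> 'g set"
  assumes "group G"
    and "countable (carrier G)"
    and "amenable G"
    and "compact (UNIV :: 'a set)"
    and "zero_dimensional (UNIV :: 'a set)"
    and "group_action G UNIV \<phi>"
    and "\<forall>g\<in>carrier G. continuous_on UNIV (\<phi> g)"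
    and "free_action G \<phi> UNIV"
    and "foelner_seq G F"
    and "\<forall>n. \<one>\<^bsub>G\<^esub> \<in> F n"
    and "\<forall>n. F n \<subseteq> F (Suc n)"
    and "\<forall>g\<in>carrier G. \<exists>m. \<forall>n\<ge>m. g \<in> F n"
  shows "\<forall>n. \<exists>V :: 'a set. open V \<and> closed V \<and>
           disjoint_family_on (\<lambda>g. \<phi> g ` V) (F n) \<and>
           (\<exists>N\<ge>n. (\<Union>g\<in>F N. \<phi> g ` V) = UNIV)"
proof
  fix n
  interpret continuous_group_action G \<phi>
    using assms(6,7) by (simp add: continuous_group_action_def continuous_group_action_axioms_def)
  have Fn: "F n \<subseteq> carrier G" "finite (F n)"
    using assms(9) by (simp_all add: foelner_seq_def)
  obtain V where V: "open V" "closed V" "disjoint_family_on (\<lambda>g. \<phi> g ` V) (F n)"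
    "V \<union> (\<Union>k\<in>difference_set G (F n). \<phi> k ` V) = UNIV"
    by (rule exists_clopen_tower_base[OF assms(4,5,8) Fn])
  have "eventually (\<lambda>N. \<forall>k\<in>difference_set G (F n). k \<in> F N) sequentially"
    using difference_set_subset_carrier[OF Fn(1)] finite_difference_set[OF Fn(2)] assms(12)
    by (intro eventually_ball_finite) (auto simp: eventually_sequentially)
  then obtain m where m: "\<And>N. m \<le> N \<Longrightarrow> difference_set G (F n) \<subseteq> F N"
    unfolding eventually_sequentially by blast
  define N where "N = max m n"
  have "V = \<phi> \<one>\<^bsub>G\<^esub> ` V"
    by simp
  then have "V \<subseteq> (\<Union>g\<in>F N. \<phi> g ` V)"
    using assms(10) by blast
  moreover have "(\<Union>k\<in>difference_set G (F n). \<phi> k ` V) \<subseteq> (\<Union>g\<in>F N. \<phi> g ` V)"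
    using m[of N] unfolding N_def by auto
  ultimately have "(\<Union>g\<in>F N. \<phi> g ` V) = UNIV"
    using V(4) by (metis Un_least top_le)
  moreover have "n \<le> N"
    unfolding N_def by simp
  ultimately show "\<exists>V. open V \<and> closed V \<and> disjoint_family_on (\<lambda>g. \<phi> g ` V) (F n) \<and>
      (\<exists>N\<ge>n. (\<Union>g\<in>F N. \<phi> g ` V) = UNIV)"
    using V(1-3) by blast
qed

end
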